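(* Let $c_0\ge0$, $c_1>0$, $a<0$, $v_\circ\ge0$ with $c_0^2+4ac_1<0$, let $v$ solve $v'=a-c_0v-c_1v^2$, $v(0)=v_\circ$, and $s(t)=\int_0^tv$. Let $\ell_1=\sqrt{c_1(A_0+|a|)}$ and let $\theta_1\in(0,\pi/2]$ be defined by $\cos\theta_1=\frac{2c_1v_\circ+c_0}{2\ell_1}$, $\sin\theta_1=\frac{|w|}{2\ell_1}$. Then for all $t\neq 0$ in the interval of existence, $$s(t)=(A_0+|a|)\,t^2\,Q(t\ell_1,\cos\theta_1)+v_\circ t,$$ where $Q(\tau,c)=\frac1{\tau^2}\log\Big(\frac{c}{\sigma}\sin(\tau\sigma)+\cos(\tau\sigma)\Big)-\frac c\tau$ with $\sigma=\sqrt{1-c^2}$. Moreover, for $c\in[0,1]$ and $0<|\tau|\le 0.001$, $$Q(\tau,c)=-\frac12+\frac{c\tau}3-\frac{2c^2+1}{12}\tau^2+\frac{c^2+2}{15}c\tau^3-\frac{2c^4+11c^2+2}{90}\tau^4+\frac{2c^4+26c^2+17}{315}c\tau^5-\varepsilon(\tau,c)$$ with $|\varepsilon(\tau,c)|\le10^{-18}$.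
   Context: $|w|=\sqrt{-(c_0^2+4ac_1)}$, $A_0=(c_1v_\circ+c_0)v_\circ$. For $c=1$ (i.e. $\sigma=0$) the expression $\frac{c}{\sigma}\sin(\tau\sigma)$ is understood as its limit $\tau$. *)

theory Defs
  imports "HOL-Analysis.Analysis"
begin

definition signed_integral0 :: "(real \<Rightarrow> real) \<Rightarrow> real \<Rightarrow> real" where
  "signed_integral0 f t =
     (if 0 \<le> t then integral {0..t} f else - integral {t..0} f)"

text \<open>(c / sigma) sin(tau sigma), with sigma = sqrt(1 - c^2); for c = 1 (sigma = 0)
  understood as its limit tau.\<close>
definition sinc_term :: "real \<Rightarrow> real \<Rightarrow> real" where
  "sinc_term \<tau> c =
     (if c = 1 then \<tau> else c / sqrt (1 - c\<^sup>2) * sin (\<tau> * sqrt (1 - c\<^sup>2)))"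

definition Qfun :: "real \<Rightarrow> real \<Rightarrow> real" where
  "Qfun \<tau> c = ln (sinc_term \<tau> c + cos (\<tau> * sqrt (1 - c\<^sup>2))) / \<tau>\<^sup>2 - c / \<tau>"

end

theory Submission
  imports Defs "HOL-Computational_Algebra.Polynomial"
begin

text \<open>With \<open>s\<close> the integral of \<open>v\<close>, the substitution \<open>p = exp (c\<^sub>1 s + c\<^sub>0 t / 2)\<close> turns the
  Riccati equation into \<open>p'' = -\<omega>\<^sup>2 p\<close> with \<open>\<omega> = |w| / 2\<close>, so
  \<open>p = cos (\<omega> t) + cot \<theta>\<^sub>1 sin (\<omega> t)\<close>; taking logarithms and rescaling time by \<open>\<ell>\<^sub>1\<close> gives the
  closed form. For the expansion, \<open>g(\<tau>) = (c/\<sigma>) sin (\<tau>\<sigma>) + cos (\<tau>\<sigma>)\<close> satisfies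
  \<open>g'' = -\<sigma>\<^sup>2 g\<close>, so \<open>h = g'/g\<close> solves \<open>h' = (c\<^sup>2 - 1) - h\<^sup>2\<close> and every derivative of \<open>ln g\<close>
  is a polynomial in \<open>h\<close>. Taylor's theorem of order 8 with Lagrange remainder, together with
  \<open>|h| \<le> 1.004\<close> for \<open>|\<tau>| \<le> 0.001\<close>, bounds the error by \<open>35600 / 8! \<cdot> 10\<^sup>-\<^sup>1\<^sup>8\<close>.\<close>

lemma harmonic_system_solution:
  fixes p q :: "real \<Rightarrow> real" and J :: "real set"
  assumes J: "convex J" "0 \<in> J" "t \<in> J"
    and dp: "\<And>x. x \<in> J \<Longrightarrow> (p has_real_derivative \<omega> * q x) (at x within J)"
    and dq: "\<And>x. x \<in> J \<Longrightarrow> (q has_real_derivative - \<omega> * p x) (at x within J)"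
  shows "p t = p 0 * cos (\<omega> * t) + q 0 * sin (\<omega> * t)"
proof -
  define A where "A x = p x * cos (\<omega> * x) - q x * sin (\<omega> * x)" for x
  define B where "B x = p x * sin (\<omega> * x) + q x * cos (\<omega> * x)" for x
  have "(A has_real_derivative 0) (at x within J)" if "x \<in> J" for x
    unfolding A_def by (rule derivative_eq_intros dp dq that refl | simp add: algebra_simps)+
  then obtain kA where kA: "\<And>x. x \<in> J \<Longrightarrow> A x = kA"
    using has_field_derivative_zero_constant[OF J(1)] by blast
  have "(B has_real_derivative 0) (at x within J)" if "x \<in> J" for x
    unfolding B_def by (rule derivative_eq_intros dp dq that refl | simp add: algebra_simps)+
  then obtain kB where kB: "\<And>x. x \<in> J \<Longrightarrow> B x = kB"
    using has_field_derivative_zero_constant[OF J(1)] by blast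
  have "p t = A t * cos (\<omega> * t) + B t * sin (\<omega> * t)"
    unfolding A_def B_def by (simp add: algebra_simps flip: distrib_left power2_eq_square)
  also have "\<dots> = A 0 * cos (\<omega> * t) + B 0 * sin (\<omega> * t)"
    using kA kB J by simp
  finally show ?thesis by (simp add: A_def B_def)
qed

lemma riccati_linearization:
  fixes a c0 c1 \<omega> :: real and v s :: "real \<Rightarrow> real" and J :: "real set"
  assumes \<omega>: "\<omega> > 0" "c1 * a + c0\<^sup>2 / 4 = - \<omega>\<^sup>2"
    and J: "convex J" "0 \<in> J" "t \<in> J"
    and dv: "\<And>x. x \<in> J \<Longrightarrow>
               (v has_real_derivative a - c0 * v x - c1 * (v x)\<^sup>2) (at x within J)"
    and ds: "\<And>x. x \<in> J \<Longrightarrow> (s has_real_derivative v x) (at x within J)"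
    and s0: "s 0 = 0"
  shows "exp (c1 * s t + c0 * t / 2) = cos (\<omega> * t) + (c1 * v 0 + c0 / 2) / \<omega> * sin (\<omega> * t)"
proof -
  define p where "p x = exp (c1 * s x + c0 * x / 2)" for x
  define q where "q x = (c1 * v x + c0 / 2) * p x / \<omega>" for x
  have dp: "(p has_real_derivative \<omega> * q x) (at x within J)" if x: "x \<in> J" for x
    unfolding p_def using \<omega>(1)
    by (auto intro!: derivative_eq_intros ds[OF x] simp: q_def p_def field_simps)
  have dq: "(q has_real_derivative - \<omega> * p x) (at x within J)" if x: "x \<in> J" for x
  proof -
    have "(q has_real_derivative
            (c1 * (a - c0 * v x - c1 * (v x)\<^sup>2) * p x + (c1 * v x + c0 / 2) * (\<omega> * q x)) / \<omega>)
            (at x within J)"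
      unfolding q_def[abs_def]
      apply (rule derivative_eq_intros dp[OF x] refl | use dv[OF x] in simp)+
      using \<omega>(1) by (simp_all add: q_def field_simps)
    moreover have "c1 * (a - c0 * v x - c1 * (v x)\<^sup>2) * p x + (c1 * v x + c0 / 2) * (\<omega> * q x)
                     = (c1 * a + c0\<^sup>2 / 4) * p x"
      using \<omega>(1) by (simp add: q_def field_simps power2_eq_square)
    ultimately show ?thesis using \<omega> by (simp add: power2_eq_square)
  qed
  show ?thesis
    using harmonic_system_solution[OF J dp dq] by (simp add: p_def q_def s0)
qed

lemma signed_integral0_eq_integral_diff:
  fixes v :: "real \<Rightarrow> real"
  assumes v: "v integrable_on {l..r}" and x: "x \<in> {l..r}" and "l \<le> 0" "0 \<le> r"
  shows "signed_integral0 v x = integral {l..x} v - integral {l..0} v"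
proof (cases "0 \<le> x")
  case True
  have "integral {l..0} v + integral {0..x} v = integral {l..x} v"
    using True x \<open>l \<le> 0\<close>
    by (intro Henstock_Kurzweil_Integration.integral_combine integrable_on_subinterval[OF v]) auto
  then show ?thesis using True by (simp add: signed_integral0_def)
next
  case False
  have "integral {l..x} v + integral {x..0} v = integral {l..0} v"
    using False x \<open>0 \<le> r\<close>
    by (intro Henstock_Kurzweil_Integration.integral_combine integrable_on_subinterval[OF v]) auto
  then show ?thesis using False by (simp add: signed_integral0_def)
qed

lemma signed_integral0_has_real_derivative:
  fixes v :: "real \<Rightarrow> real"
  assumes v: "continuous_on {l..r} v" and x: "x \<in> {l..r}" and "l \<le> 0" "0 \<le> r"
  shows "(signed_integral0 v has_real_derivative v x) (at x within {l..r})"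
proof (rule has_field_derivative_transform_within)
  show "((\<lambda>y. integral {l..y} v - integral {l..0} v) has_real_derivative v x) (at x within {l..r})"
    using integral_has_real_derivative[OF v x] by (auto intro!: derivative_eq_intros)
  show "integral {l..y} v - integral {l..0} v = signed_integral0 v y" if "y \<in> {l..r}" for y
    using signed_integral0_eq_integral_diff[OF integrable_continuous_real[OF v] that] assms
    by simp
qed (use x in \<open>auto intro: zero_less_one\<close>)

lemma Qfun_cos:
  assumes "0 < \<theta>" "\<theta> \<le> pi / 2"
  shows "Qfun \<tau> (cos \<theta>) =
           ln (cos (\<tau> * sin \<theta>) + cos \<theta> / sin \<theta> * sin (\<tau> * sin \<theta>)) / \<tau>\<^sup>2 - cos \<theta> / \<tau>"
proof -
  have "0 < sin \<theta>" using assms by (intro sin_gt_zero) auto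
  then have "sqrt (1 - (cos \<theta>)\<^sup>2) = sin \<theta>" by (simp add: sin_squared_eq [symmetric])
  moreover have "cos \<theta> \<noteq> 1" using \<open>0 < sin \<theta>\<close> sin_squared_eq[of \<theta>] by auto
  ultimately show ?thesis by (simp add: Qfun_def sinc_term_def add.commute)
qed

lemma riccati_exp_signed_integral0:
  fixes a c0 c1 \<omega> :: real and v :: "real \<Rightarrow> real" and I :: "real set"
  assumes \<omega>: "\<omega> > 0" "c1 * a + c0\<^sup>2 / 4 = - \<omega>\<^sup>2"
    and I: "is_interval I" "0 \<in> I" "t \<in> I"
    and dv: "\<And>x. x \<in> I \<Longrightarrow>
               (v has_real_derivative a - c0 * v x - c1 * (v x)\<^sup>2) (at x within I)"
  shows "exp (c1 * signed_integral0 v t + c0 * t / 2)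
           = cos (\<omega> * t) + (c1 * v 0 + c0 / 2) / \<omega> * sin (\<omega> * t)"
proof -
  define J where "J = {min 0 t..max 0 t}"
  have J: "convex J" "0 \<in> J" "t \<in> J" by (auto simp: J_def)
  have "J \<subseteq> I"
    using closed_segment_subset[OF I(2,3) is_interval_convex[OF I(1)]]
    by (simp add: J_def closed_segment_eq_real_ivl split: if_splits)
  then have dvJ: "(v has_real_derivative a - c0 * v x - c1 * (v x)\<^sup>2) (at x within J)"
    if "x \<in> J" for x
    using has_field_derivative_subset[OF dv] that by blast
  have "continuous_on J v"
    using DERIV_continuous_on[OF dv] \<open>J \<subseteq> I\<close> continuous_on_subset by blast
  then have "(signed_integral0 v has_real_derivative v x) (at x within J)" if "x \<in> J" for x
    using signed_integral0_has_real_derivative that by (simp add: J_def)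
  from riccati_linearization[OF \<omega> J dvJ this] show ?thesis by (simp add: signed_integral0_def)
qed

lemma riccati_integral_eq_Qfun:
  fixes c0 c1 a v0 \<theta>1 :: real and v :: "real \<Rightarrow> real" and I :: "real set"
  assumes hc0: "c0 \<ge> 0" and hc1: "c1 > 0" and ha: "a < 0" and hv0: "v0 \<ge> 0"
    and hdisc: "c0\<^sup>2 + 4 * a * c1 < 0"
    and hI: "is_interval I" and h0I: "0 \<in> I"
    and hode: "\<And>t. t \<in> I \<Longrightarrow>
                 (v has_real_derivative (a - c0 * v t - c1 * (v t)\<^sup>2)) (at t within I)"
    and hinit: "v 0 = v0"
    and h\<theta>: "0 < \<theta>1" "\<theta>1 \<le> pi / 2"
    and hcos: "cos \<theta>1 = (2 * c1 * v0 + c0) /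
                 (2 * sqrt (c1 * ((c1 * v0 + c0) * v0 + \<bar>a\<bar>)))"
    and hsin: "sin \<theta>1 = sqrt (- (c0\<^sup>2 + 4 * a * c1)) /
                 (2 * sqrt (c1 * ((c1 * v0 + c0) * v0 + \<bar>a\<bar>)))"
    and tI: "t \<in> I" and t0: "t \<noteq> 0"
  shows "signed_integral0 v t =
           ((c1 * v0 + c0) * v0 + \<bar>a\<bar>) * t\<^sup>2 *
             Qfun (t * sqrt (c1 * ((c1 * v0 + c0) * v0 + \<bar>a\<bar>))) (cos \<theta>1)
           + v0 * t"
proof -
  define \<omega> where "\<omega> = sqrt (- (c0\<^sup>2 + 4 * a * c1)) / 2"
  have \<omega>: "\<omega> > 0" "c1 * a + c0\<^sup>2 / 4 = - \<omega>\<^sup>2"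
    using hdisc by (auto simp: \<omega>_def power_divide field_simps)
  define P where "P = cos (\<omega> * t) + (c1 * v0 + c0 / 2) / \<omega> * sin (\<omega> * t)"
  have "exp (c1 * signed_integral0 v t + c0 * t / 2) = P"
    using riccati_exp_signed_integral0[OF \<omega> hI h0I tI hode] by (simp add: P_def hinit)
  then have lnP: "ln P = c1 * signed_integral0 v t + c0 * t / 2" by (metis ln_exp)
  define B where "B = (c1 * v0 + c0) * v0 + \<bar>a\<bar>"
  have "(c1 * v0 + c0) * v0 \<ge> 0" using hc0 hc1 hv0 by simp
  then have B: "B > 0" using ha by (simp add: B_def)
  define L where "L = sqrt (c1 * B)"
  have L: "L > 0" "L\<^sup>2 = c1 * B" using B hc1 by (auto simp: L_def)
  have sin\<theta>: "sin \<theta>1 = \<omega> / L" using hsin by (simp add: \<omega>_def L_def B_def)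
  have cos\<theta>: "cos \<theta>1 = (c1 * v0 + c0 / 2) / L" using hcos by (simp add: L_def B_def field_simps)
  have Q: "Qfun (t * L) (cos \<theta>1) = ln P / (t * L)\<^sup>2 - cos \<theta>1 / (t * L)"
    using Qfun_cos[OF h\<theta>] L \<omega> by (simp add: P_def sin\<theta> cos\<theta> add.commute mult.commute)
  have "c1 * (B * t\<^sup>2 * Qfun (t * L) (cos \<theta>1) + v0 * t)
          = L\<^sup>2 * t\<^sup>2 * Qfun (t * L) (cos \<theta>1) + c1 * v0 * t"
    using L(2) by (simp add: algebra_simps)
  also have "\<dots> = ln P - c0 * t / 2"
    unfolding Q using t0 L(1) by (simp add: cos\<theta> field_simps power2_eq_square)
  also have "\<dots> = c1 * signed_integral0 v t" using lnP by simp
  finally show ?thesis using hc1 by (simp add: B_def L_def)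
qed

text \<open>If \<open>h' = m - h\<^sup>2\<close>, the \<open>k\<close>-th derivative of \<open>h\<close> is \<open>poly (riccati_poly m k) h\<close>.\<close>

fun riccati_poly :: "real \<Rightarrow> nat \<Rightarrow> real poly" where
  "riccati_poly m 0 = [:0, 1:]"
| "riccati_poly m (Suc k) = pderiv (riccati_poly m k) * [:m, 0, -1:]"

lemma riccati_poly_has_real_derivative:
  assumes "(h has_real_derivative m - (h t)\<^sup>2) (at t)"
  shows "((\<lambda>t. poly (riccati_poly m k) (h t)) has_real_derivative
           poly (riccati_poly m (Suc k)) (h t)) (at t)"
  using DERIV_chain2[OF poly_DERIV assms] by (simp add: power2_eq_square algebra_simps)

lemma ln_Maclaurin_riccati:
  fixes g g' :: "real \<Rightarrow> real" and m c \<tau> :: real and n :: nat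
  assumes dg: "\<And>t. \<bar>t\<bar> \<le> \<bar>\<tau>\<bar> \<Longrightarrow> (g has_real_derivative g' t) (at t)"
    and dg': "\<And>t. \<bar>t\<bar> \<le> \<bar>\<tau>\<bar> \<Longrightarrow> (g' has_real_derivative m * g t) (at t)"
    and pos: "\<And>t. \<bar>t\<bar> \<le> \<bar>\<tau>\<bar> \<Longrightarrow> 0 < g t"
    and g0: "g 0 = 1" and g'0: "g' 0 = c"
  obtains t where "\<bar>t\<bar> \<le> \<bar>\<tau>\<bar>"
    and "ln (g \<tau>) = (\<Sum>k<n. poly (riccati_poly m k) c / fact (Suc k) * \<tau> ^ Suc k)
                    + poly (riccati_poly m n) (g' t / g t) / fact (Suc n) * \<tau> ^ Suc n"
proof -
  define h where "h t = g' t / g t" for t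
  have dh: "(h has_real_derivative m - (h t)\<^sup>2) (at t)" if t: "\<bar>t\<bar> \<le> \<bar>\<tau>\<bar>" for t
    unfolding h_def[abs_def] using pos[OF t]
    by (auto intro!: derivative_eq_intros dg[OF t] dg'[OF t] simp: h_def field_simps power2_eq_square)
  define diff where "diff k = (case k of 0 \<Rightarrow> (\<lambda>t. ln (g t))
                                | Suc j \<Rightarrow> (\<lambda>t. poly (riccati_poly m j) (h t)))" for k
  have "(diff k has_real_derivative diff (Suc k) t) (at t)" if t: "\<bar>t\<bar> \<le> \<bar>\<tau>\<bar>" for k t
  proof (cases k)
    case 0
    then show ?thesis using pos[OF t]
      by (auto intro!: derivative_eq_intros dg[OF t] simp: diff_def h_def)
  next
    case (Suc j)
    then show ?thesis using riccati_poly_has_real_derivative[OF dh[OF t]] by (simp add: diff_def)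
  qed
  then obtain t where t: "\<bar>t\<bar> \<le> \<bar>\<tau>\<bar>"
    and "ln (g \<tau>) = (\<Sum>k<Suc n. diff k 0 / fact k * \<tau> ^ k) + diff (Suc n) t / fact (Suc n) * \<tau> ^ Suc n"
    using Maclaurin_bi_le[of diff "\<lambda>t. ln (g t)" "Suc n" \<tau>] by (auto simp: diff_def)
  moreover have "(\<Sum>k<Suc n. diff k 0 / fact k * \<tau> ^ k)
                   = (\<Sum>k<n. poly (riccati_poly m k) c / fact (Suc k) * \<tau> ^ Suc k)"
    unfolding sum.lessThan_Suc_shift by (simp add: diff_def g0 g'0 h_def)
  ultimately show thesis using that by (simp add: diff_def h_def)
qed

lemma riccati_Taylor_sum_7:
  "(\<Sum>k<7. poly (riccati_poly (c\<^sup>2 - 1) k) c / fact (Suc k) * \<tau> ^ Suc k) =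
     c * \<tau> - \<tau>\<^sup>2 / 2 + c * \<tau> ^ 3 / 3 - (2 * c\<^sup>2 + 1) / 12 * \<tau> ^ 4
     + (c\<^sup>2 + 2) / 15 * c * \<tau> ^ 5 - (2 * c ^ 4 + 11 * c\<^sup>2 + 2) / 90 * \<tau> ^ 6
     + (2 * c ^ 4 + 26 * c\<^sup>2 + 17) / 315 * c * \<tau> ^ 7"
  by (simp add: numeral_eq_Suc pderiv_pCons pderiv_add pderiv_smult pderiv_minus
      field_simps power2_eq_square power3_eq_cube)

lemma abs_riccati_poly_7_le:
  assumes "\<bar>x\<bar> \<le> 1.004" "-1 \<le> m" "m \<le> 0"
  shows "\<bar>poly (riccati_poly m 7) x\<bar> \<le> 35600"
proof -
  define n where "n = -m"
  define y where "y = x\<^sup>2"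
  have n: "0 \<le> n" "n \<le> 1" using assms by (auto simp: n_def)
  have y: "0 \<le> y" "y \<le> 1.004\<^sup>2" unfolding y_def using assms by (auto simp: power2_le_iff_abs_le)
  have "poly (riccati_poly m 7) x = -(272*n^4 + 3968*y*n^3 + 12096*y^2*n^2 + 13440*y^3*n + 5040*y^4)"
    by (simp add: n_def y_def numeral_eq_Suc pderiv_pCons pderiv_add pderiv_smult pderiv_minus
        algebra_simps power2_eq_square power3_eq_cube)
  moreover have "272*n^4 + 3968*y*n^3 + 12096*y^2*n^2 + 13440*y^3*n + 5040*y^4
      \<le> 272*1^4 + 3968*1.004^2*1^3 + 12096*(1.004^2)^2*1^2 + 13440*(1.004^2)^3*1 + 5040*(1.004^2)^4"
    using n y by (intro add_mono mult_mono power_mono mult_nonneg_nonneg) auto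
  moreover have "272*1^4 + 3968*1.004^2*1^3 + 12096*(1.004^2)^2*1^2 + 13440*(1.004^2)^3*1
                 + 5040*(1.004^2)^4 \<le> (35600::real)"
    by (simp add: eval_nat_numeral)
  moreover have "0 \<le> 272*n^4 + 3968*y*n^3 + 12096*y^2*n^2 + 13440*y^3*n + 5040*y^4" using n y by simp
  ultimately show ?thesis by simp
qed

definition harmonic_sin :: "real \<Rightarrow> real \<Rightarrow> real" where
  "harmonic_sin \<sigma> t = (if \<sigma> = 0 then t else sin (\<sigma> * t) / \<sigma>)"

lemma harmonic_sin_has_real_derivative:
  "(harmonic_sin \<sigma> has_real_derivative cos (\<sigma> * t)) (at t)"
  by (cases "\<sigma> = 0") (auto simp: harmonic_sin_def[abs_def] intro!: derivative_eq_intros)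

lemma harmonic_sin_mult_square: "\<sigma>\<^sup>2 * harmonic_sin \<sigma> t = \<sigma> * sin (\<sigma> * t)"
  by (simp add: harmonic_sin_def power2_eq_square)

lemma abs_harmonic_sin_le: "\<bar>harmonic_sin \<sigma> t\<bar> \<le> \<bar>t\<bar>"
proof (cases "\<sigma> = 0")
  case False
  have "\<bar>sin (\<sigma> * t)\<bar> \<le> \<bar>\<sigma>\<bar> * \<bar>t\<bar>" using abs_sin_x_le_abs_x[of "\<sigma> * t"] by (simp add: abs_mult)
  then show ?thesis using False by (simp add: harmonic_sin_def abs_divide divide_le_eq mult.commute)
qed (simp add: harmonic_sin_def)

lemma sinc_term_eq_harmonic_sin:
  assumes "0 \<le> c" "c \<le> 1"
  shows "sinc_term \<tau> c = c * harmonic_sin (sqrt (1 - c\<^sup>2)) \<tau>"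
proof -
  have "sqrt (1 - c\<^sup>2) = 0 \<longleftrightarrow> c = 1"
    using assms by (auto simp: power2_eq_1_iff)
  then show ?thesis by (simp add: sinc_term_def harmonic_sin_def mult.commute)
qed

lemma cos_ge_one_minus_half_square: "1 - x\<^sup>2 / 2 \<le> cos (x :: real)"
proof -
  have "\<bar>sin (x / 2)\<bar>\<^sup>2 \<le> \<bar>x / 2\<bar>\<^sup>2"
    using abs_sin_x_le_abs_x[of "x / 2"] by (rule power_mono) simp
  then have "sin (x / 2) ^ 2 \<le> (x / 2)\<^sup>2" by (simp only: power2_abs)
  moreover have "cos x = 1 - 2 * sin (x / 2) ^ 2" using cos_double_sin[of "x / 2"] by simp
  ultimately show ?thesis by (simp add: power_divide)
qed

lemma harmonic_sin_bounds:
  assumes c: "0 \<le> c" "c \<le> 1" and \<sigma>: "0 \<le> \<sigma>" "\<sigma> \<le> 1" and t: "\<bar>t\<bar> \<le> 0.001"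
  shows "0.998 \<le> c * harmonic_sin \<sigma> t + cos (\<sigma> * t)"
    and "\<bar>c * cos (\<sigma> * t) - \<sigma>\<^sup>2 * harmonic_sin \<sigma> t\<bar> \<le> 1.001"
proof -
  have S: "\<bar>harmonic_sin \<sigma> t\<bar> \<le> 0.001" using abs_harmonic_sin_le t by (rule order_trans)
  have "\<bar>\<sigma> * t\<bar> \<le> 0.001" using \<sigma> t mult_left_le_one_le[of "\<bar>t\<bar>" \<sigma>] by (simp add: abs_mult)
  then have "(\<sigma> * t)\<^sup>2 \<le> 0.001\<^sup>2" by (simp add: abs_le_square_iff[symmetric])
  then have "(\<sigma> * t)\<^sup>2 \<le> 1 / 1000000" by (simp add: power_divide)
  then have "0.999 \<le> cos (\<sigma> * t)" using cos_ge_one_minus_half_square[of "\<sigma> * t"] by simp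
  moreover have "\<bar>c * harmonic_sin \<sigma> t\<bar> \<le> 0.001"
    using c S mult_left_le_one_le[of "\<bar>harmonic_sin \<sigma> t\<bar>" c] by (simp add: abs_mult)
  ultimately show "0.998 \<le> c * harmonic_sin \<sigma> t + cos (\<sigma> * t)" by linarith
  have "\<sigma>\<^sup>2 \<le> 1" using \<sigma> by (simp add: power_le_one)
  then have "\<bar>\<sigma>\<^sup>2 * harmonic_sin \<sigma> t\<bar> \<le> 0.001"
    using S mult_left_le_one_le[of "\<bar>harmonic_sin \<sigma> t\<bar>" "\<sigma>\<^sup>2"] by (simp add: abs_mult)
  moreover have "\<bar>c * cos (\<sigma> * t)\<bar> \<le> 1" using c by (simp add: abs_mult mult_le_one)
  ultimately show "\<bar>c * cos (\<sigma> * t) - \<sigma>\<^sup>2 * harmonic_sin \<sigma> t\<bar> \<le> 1.001"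
    using abs_triangle_ineq4[of "c * cos (\<sigma> * t)" "\<sigma>\<^sup>2 * harmonic_sin \<sigma> t"] by simp
qed

lemma harmonic_sin_cos_has_real_derivative:
  "((\<lambda>t. c * harmonic_sin \<sigma> t + cos (\<sigma> * t)) has_real_derivative
      c * cos (\<sigma> * t) - \<sigma>\<^sup>2 * harmonic_sin \<sigma> t) (at t)"
  unfolding harmonic_sin_mult_square
  by (auto intro!: derivative_eq_intros harmonic_sin_has_real_derivative)

lemma harmonic_cos_sin_has_real_derivative:
  "((\<lambda>t. c * cos (\<sigma> * t) - \<sigma>\<^sup>2 * harmonic_sin \<sigma> t) has_real_derivative
      - \<sigma>\<^sup>2 * (c * harmonic_sin \<sigma> t + cos (\<sigma> * t))) (at t)"
proof -
  have "- \<sigma>\<^sup>2 * (c * harmonic_sin \<sigma> t + cos (\<sigma> * t))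
          = - c * (\<sigma>\<^sup>2 * harmonic_sin \<sigma> t) - \<sigma>\<^sup>2 * cos (\<sigma> * t)"
    by (simp add: algebra_simps)
  also have "\<dots> = - c * (\<sigma> * sin (\<sigma> * t)) - \<sigma>\<^sup>2 * cos (\<sigma> * t)"
    by (simp only: harmonic_sin_mult_square)
  finally show ?thesis
    by (rule DERIV_cong[rotated, OF sym])
       (auto intro!: derivative_eq_intros harmonic_sin_has_real_derivative)
qed

lemma ln_harmonic_Maclaurin:
  assumes c: "0 \<le> c" "c \<le> 1" and \<tau>: "\<bar>\<tau>\<bar> \<le> 0.001"
  defines "\<sigma> \<equiv> sqrt (1 - c\<^sup>2)"
  obtains R where "\<bar>R\<bar> \<le> 35600"
    and "ln (c * harmonic_sin \<sigma> \<tau> + cos (\<sigma> * \<tau>)) =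
           (\<Sum>k<7. poly (riccati_poly (c\<^sup>2 - 1) k) c / fact (Suc k) * \<tau> ^ Suc k)
           + R / fact 8 * \<tau> ^ 8"
proof -
  have c2: "c\<^sup>2 \<le> 1" using c by (simp add: power_le_one)
  have \<sigma>: "0 \<le> \<sigma>" "\<sigma> \<le> 1" "- \<sigma>\<^sup>2 = c\<^sup>2 - 1" using c c2 by (auto simp: \<sigma>_def)
  define g where "g t = c * harmonic_sin \<sigma> t + cos (\<sigma> * t)" for t
  define g' where "g' t = c * cos (\<sigma> * t) - \<sigma>\<^sup>2 * harmonic_sin \<sigma> t" for t
  have bounds: "0.998 \<le> g t" "\<bar>g' t\<bar> \<le> 1.001" if "\<bar>t\<bar> \<le> \<bar>\<tau>\<bar>" for t
    using harmonic_sin_bounds[OF c \<sigma>(1,2)] that \<tau> unfolding g_def g'_def by auto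
  have pos: "0 < g t" if "\<bar>t\<bar> \<le> \<bar>\<tau>\<bar>" for t
    using bounds(1)[OF that] by simp
  have dg: "(g has_real_derivative g' t) (at t)" for t
    unfolding g_def[abs_def] g'_def by (rule harmonic_sin_cos_has_real_derivative)
  have dg': "(g' has_real_derivative (c\<^sup>2 - 1) * g t) (at t)" for t
    unfolding g'_def[abs_def] g_def \<sigma>(3)[symmetric] by (rule harmonic_cos_sin_has_real_derivative)
  have g0: "g 0 = 1" "g' 0 = c" by (simp_all add: g_def g'_def harmonic_sin_def)
  obtain t where t: "\<bar>t\<bar> \<le> \<bar>\<tau>\<bar>"
    and ln_g: "ln (g \<tau>) = (\<Sum>k<7. poly (riccati_poly (c\<^sup>2 - 1) k) c / fact (Suc k) * \<tau> ^ Suc k)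
                 + poly (riccati_poly (c\<^sup>2 - 1) 7) (g' t / g t) / fact (Suc 7) * \<tau> ^ Suc 7"
    by (rule ln_Maclaurin_riccati[OF dg dg' pos g0])
  have "\<bar>g' t / g t\<bar> = \<bar>g' t\<bar> / g t" using pos[OF t] by (simp add: abs_divide)
  also have "\<dots> \<le> 1.001 / 0.998" using bounds[OF t] by (intro frac_le) auto
  finally have "\<bar>poly (riccati_poly (c\<^sup>2 - 1) 7) (g' t / g t)\<bar> \<le> 35600"
    using c2 by (intro abs_riccati_poly_7_le) auto
  with ln_g that show thesis by (simp add: g_def)
qed

lemma Qfun_Maclaurin_expansion:
  fixes \<tau> c :: real
  assumes c: "0 \<le> c" "c \<le> 1" and \<tau>: "0 < \<bar>\<tau>\<bar>" "\<bar>\<tau>\<bar> \<le> 0.001"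
  shows "\<exists>\<epsilon>. Qfun \<tau> c =
                 - 1/2 + c * \<tau> / 3 - (2 * c\<^sup>2 + 1) / 12 * \<tau>\<^sup>2
                 + (c\<^sup>2 + 2) / 15 * c * \<tau> ^ 3
                 - (2 * c ^ 4 + 11 * c\<^sup>2 + 2) / 90 * \<tau> ^ 4
                 + (2 * c ^ 4 + 26 * c\<^sup>2 + 17) / 315 * c * \<tau> ^ 5 - \<epsilon>
               \<and> \<bar>\<epsilon>\<bar> \<le> 10 powi (-18)"
proof -
  define \<sigma> where "\<sigma> = sqrt (1 - c\<^sup>2)"
  obtain R where R: "\<bar>R\<bar> \<le> 35600"
    and ln_g: "ln (c * harmonic_sin \<sigma> \<tau> + cos (\<sigma> * \<tau>)) =
                 (\<Sum>k<7. poly (riccati_poly (c\<^sup>2 - 1) k) c / fact (Suc k) * \<tau> ^ Suc k)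
                 + R / fact 8 * \<tau> ^ 8"
    using ln_harmonic_Maclaurin[OF c \<tau>(2)] unfolding \<sigma>_def by blast
  define \<epsilon> where "\<epsilon> = - R / fact 8 * \<tau> ^ 6"
  have "\<bar>\<epsilon>\<bar> \<le> 35600 / fact 8 * 0.001 ^ 6"
    unfolding \<epsilon>_def abs_mult abs_divide abs_minus power_abs
    using R \<tau>(2) by (intro mult_mono power_mono) (auto intro: divide_right_mono)
  also have "\<dots> \<le> 10 powi (-18)" by (simp add: power_int_minus power_divide fact_numeral)
  finally have "\<bar>\<epsilon>\<bar> \<le> 10 powi (-18)" .
  define P where "P = - 1/2 + c * \<tau> / 3 - (2 * c\<^sup>2 + 1) / 12 * \<tau>\<^sup>2
                 + (c\<^sup>2 + 2) / 15 * c * \<tau> ^ 3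
                 - (2 * c ^ 4 + 11 * c\<^sup>2 + 2) / 90 * \<tau> ^ 4
                 + (2 * c ^ 4 + 26 * c\<^sup>2 + 17) / 315 * c * \<tau> ^ 5"
  have ln_g_P: "ln (c * harmonic_sin \<sigma> \<tau> + cos (\<sigma> * \<tau>)) = \<tau>\<^sup>2 * (P - \<epsilon>) + c * \<tau>"
    unfolding ln_g riccati_Taylor_sum_7 \<epsilon>_def P_def by (simp add: field_simps) algebra
  have "Qfun \<tau> c = ln (c * harmonic_sin \<sigma> \<tau> + cos (\<sigma> * \<tau>)) / \<tau>\<^sup>2 - c / \<tau>"
    by (simp add: Qfun_def sinc_term_eq_harmonic_sin[OF c] \<sigma>_def mult.commute)
  also have "\<dots> = P - \<epsilon>"
    unfolding ln_g_P using \<tau>(1) by (simp add: field_simps power2_eq_square)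
  finally have "Qfun \<tau> c = P - \<epsilon>" .
  with \<open>\<bar>\<epsilon>\<bar> \<le> 10 powi (-18)\<close> show ?thesis unfolding P_def by blast
qed

theorem mainTheorem10:
  fixes c0 c1 a v0 \<theta>1 :: real and v :: "real \<Rightarrow> real" and I :: "real set"
  assumes hc0: "c0 \<ge> 0" and hc1: "c1 > 0" and ha: "a < 0" and hv0: "v0 \<ge> 0"
    and hdisc: "c0\<^sup>2 + 4 * a * c1 < 0"
    and hI: "is_interval I" and h0I: "0 \<in> I"
    and hode: "\<And>t. t \<in> I \<Longrightarrow>
                 (v has_real_derivative (a - c0 * v t - c1 * (v t)\<^sup>2)) (at t within I)"
    and hinit: "v 0 = v0"
    and h\<theta>: "0 < \<theta>1" "\<theta>1 \<le> pi / 2"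
    and hcos: "cos \<theta>1 = (2 * c1 * v0 + c0) /
                 (2 * sqrt (c1 * ((c1 * v0 + c0) * v0 + \<bar>a\<bar>)))"
    and hsin: "sin \<theta>1 = sqrt (- (c0\<^sup>2 + 4 * a * c1)) /
                 (2 * sqrt (c1 * ((c1 * v0 + c0) * v0 + \<bar>a\<bar>)))"
  shows "(\<forall>t \<in> I. t \<noteq> 0 \<longrightarrow>
            signed_integral0 v t =
              ((c1 * v0 + c0) * v0 + \<bar>a\<bar>) * t\<^sup>2 *
                Qfun (t * sqrt (c1 * ((c1 * v0 + c0) * v0 + \<bar>a\<bar>))) (cos \<theta>1)
              + v0 * t)
       \<and> (\<forall>\<tau> c :: real. 0 \<le> c \<longrightarrow> c \<le> 1 \<longrightarrow> 0 < \<bar>\<tau>\<bar> \<longrightarrow> \<bar>\<tau>\<bar> \<le> 0.001 \<longrightarrow>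
            (\<exists>\<epsilon>. Qfun \<tau> c =
                 - 1/2 + c * \<tau> / 3 - (2 * c\<^sup>2 + 1) / 12 * \<tau>\<^sup>2
                 + (c\<^sup>2 + 2) / 15 * c * \<tau> ^ 3
                 - (2 * c ^ 4 + 11 * c\<^sup>2 + 2) / 90 * \<tau> ^ 4
                 + (2 * c ^ 4 + 26 * c\<^sup>2 + 17) / 315 * c * \<tau> ^ 5 - \<epsilon>
               \<and> \<bar>\<epsilon>\<bar> \<le> 10 powi (-18)))"
proof (intro conjI allI impI ballI)
  fix t assume "t \<in> I" "t \<noteq> 0"
  then show "signed_integral0 v t =
               ((c1 * v0 + c0) * v0 + \<bar>a\<bar>) * t\<^sup>2 *
                 Qfun (t * sqrt (c1 * ((c1 * v0 + c0) * v0 + \<bar>a\<bar>))) (cos \<theta>1)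
               + v0 * t"
    using riccati_integral_eq_Qfun[OF assms] by blast
qed (rule Qfun_Maclaurin_expansion)

end
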